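(* Let $\mathfrak{A}[\tau]$ be a topological partial *-algebra and let $x\in\mathfrak{A}$ with $x^*\in L(x)$. If $x^*x=0$, then $x\in\mathcal{R}^*(\mathfrak{A})$.
   Context: A partial *-algebra is a complex vector space $\mathfrak{A}$ with a conjugate-linear involution $x\mapsto x^*$ and a distributive partial multiplication defined on a set $\Gamma\subset\mathfrak{A}\times\mathfrak{A}$ such that $(x,y)\in\Gamma$ iff $(y^*,x^* )\in\Gamma$, in which case $(xy)^*=y^*x^*$; $L(y)=\{x:(x,y)\in\Gamma\}$, $R(y)=\{x:(y,x)\in\Gamma\}$. A topological partial *-algebra is a partial *-algebra with a Hausdorff locally convex topology $\tau$ such that for each $x$ the map $y\in R(x)\mapsto xy$ is closed (if $y_\alpha\in R(x)$, $y_\alpha\to y$, $xy_\alpha\to z$, then $y\in R(x)$, $z=xy$). For a dense subspace $\mathcal{D}$ of a Hilbert space $\mathcal{H}$, $\mathcal{L}^\dagger(\mathcal{D},\mathcal{H})$ is the set of linear operators $X$ with domain $\mathcal{D}$ and $D(X^* )\supseteq\mathcal{D}$, with $X^\dagger=X^*|_{\mathcal{D}}$ and weak product $X_1\Box X_2:=(X_1^\dagger)^*X_2$ defined when $X_2\mathcal{D}\subset D((X_1^\dagger)^* )$ and $X_1^*\mathcal{D}\subset D(X_2^* )$. A *-representation is a linear $\pi:\mathfrak{A}\to\mathcal{L}^\dagger(\mathcal{D}(\pi),\mathcal{H})$ with $\pi(x^* )=\pi(x)^\dagger$ and such that $x\in L(y)$ implies $\pi(x)\Box\pi(y)$ is defined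 and equals $\pi(xy)$; it is $(\tau,\mathsf{t}_s)$-continuous if $x\mapsto\pi(x)\xi$ is continuous from $\mathfrak{A}[\tau]$ to $\mathcal{H}$ for every $\xi\in\mathcal{D}(\pi)$. The *-radical is $\mathcal{R}^*(\mathfrak{A})=\{x:\pi(x)=0$ for all $(\tau,\mathsf{t}_s)$-continuous *-representations $\pi\}$ (equal to $\mathfrak{A}$ if there are none). *)

theory Defs
  imports "HOL-Analysis.Analysis"
begin

text \<open>A partial *-algebra: complex vector space (scalar multiplication sm), involution invol,
  the set Gam of multipliable pairs and the (partial) multiplication pmult, only meaningful on Gam.\<close>

definition partial_star_algebra ::
  "(complex \<Rightarrow> 'a::ab_group_add \<Rightarrow> 'a) \<Rightarrow> ('a \<Rightarrow> 'a) \<Rightarrow> ('a \<times> 'a) set \<Rightarrow> ('a \<Rightarrow> 'a \<Rightarrow> 'a) \<Rightarrow> bool"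
  where
  "partial_star_algebra sm invol Gam pmult \<longleftrightarrow>
     vector_space sm \<and>
     (\<forall>x. invol (invol x) = x) \<and>
     (\<forall>x y. invol (x + y) = invol x + invol y) \<and>
     (\<forall>c x. invol (sm c x) = sm (cnj c) (invol x)) \<and>
     (\<forall>x y. (x, y) \<in> Gam \<longleftrightarrow> (invol y, invol x) \<in> Gam) \<and>
     (\<forall>x y. (x, y) \<in> Gam \<longrightarrow> invol (pmult x y) = pmult (invol y) (invol x)) \<and>
     (\<forall>x y z a b. (x, y) \<in> Gam \<and> (x, z) \<in> Gam \<longrightarrow>
        (x, sm a y + sm b z) \<in> Gam \<and> pmult x (sm a y + sm b z) = sm a (pmult x y) + sm b (pmult x z)) \<and>
     (\<forall>x y z a b. (y, x) \<in> Gam \<and> (z, x) \<in> Gam \<longrightarrow>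
        (sm a y + sm b z, x) \<in> Gam \<and> pmult (sm a y + sm b z) x = sm a (pmult y x) + sm b (pmult z x))"

definition L :: "('a \<times> 'a) set \<Rightarrow> 'a \<Rightarrow> 'a set"
  where "L Gam y = {x. (x, y) \<in> Gam}"

definition R :: "('a \<times> 'a) set \<Rightarrow> 'a \<Rightarrow> 'a set"
  where "R Gam y = {x. (y, x) \<in> Gam}"

definition convex_sm :: "(complex \<Rightarrow> 'a::ab_group_add \<Rightarrow> 'a) \<Rightarrow> 'a set \<Rightarrow> bool"
  where "convex_sm sm V \<longleftrightarrow>
    (\<forall>x\<in>V. \<forall>y\<in>V. \<forall>t::real. 0 \<le> t \<and> t \<le> 1 \<longrightarrow> sm (of_real t) x + sm (of_real (1 - t)) y \<in> V)"

definition locally_convex_topology :: "(complex \<Rightarrow> 'a::ab_group_add \<Rightarrow> 'a) \<Rightarrow> 'a topology \<Rightarrow> bool"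
  where "locally_convex_topology sm tau \<longleftrightarrow>
    topspace tau = UNIV \<and> Hausdorff_space tau \<and>
    continuous_map (prod_topology tau tau) tau (\<lambda>(x, y). x + y) \<and>
    continuous_map (prod_topology (euclidean :: complex topology) tau) tau (\<lambda>(c, x). sm c x) \<and>
    (\<forall>x U. openin tau U \<and> x \<in> U \<longrightarrow> (\<exists>V. openin tau V \<and> convex_sm sm V \<and> x \<in> V \<and> V \<subseteq> U))"

text \<open>Topological partial *-algebra: for each x the map y \<in> R(x) \<mapsto> xy is closed,
  i.e. its graph is closed in tau \<times> tau (equivalent to the net formulation).\<close>
definition topological_partial_star_algebra ::
  "(complex \<Rightarrow> 'a::ab_group_add \<Rightarrow> 'a) \<Rightarrow> ('a \<Rightarrow> 'a) \<Rightarrow> ('a \<times> 'a) set \<Rightarrow> ('a \<Rightarrow> 'a \<Rightarrow> 'a) \<Rightarrow> 'a topology \<Rightarrow> bool"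
  where "topological_partial_star_algebra sm invol Gam pmult tau \<longleftrightarrow>
    partial_star_algebra sm invol Gam pmult \<and> locally_convex_topology sm tau \<and>
    (\<forall>x. closedin (prod_topology tau tau) {(y, pmult x y) | y. y \<in> R Gam x})"

definition hnorm :: "('h \<Rightarrow> 'h \<Rightarrow> complex) \<Rightarrow> 'h \<Rightarrow> real"
  where "hnorm ip u = sqrt (Re (ip u u))"

text \<open>Inner product ip, linear in the second and conjugate-linear in the first argument.\<close>
definition hilbert_space :: "(complex \<Rightarrow> 'h::ab_group_add \<Rightarrow> 'h) \<Rightarrow> ('h \<Rightarrow> 'h \<Rightarrow> complex) \<Rightarrow> bool"
  where "hilbert_space smH ip \<longleftrightarrow>
    vector_space smH \<and>
    (\<forall>u v w. ip u (v + w) = ip u v + ip u w) \<and>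
    (\<forall>u v c. ip u (smH c v) = c * ip u v) \<and>
    (\<forall>u v. ip v u = cnj (ip u v)) \<and>
    (\<forall>u. 0 \<le> Re (ip u u)) \<and>
    (\<forall>u. ip u u = 0 \<longrightarrow> u = 0) \<and>
    (\<forall>s::nat \<Rightarrow> 'h. (\<forall>e>0. \<exists>N. \<forall>m\<ge>N. \<forall>n\<ge>N. hnorm ip (s m - s n) < e) \<longrightarrow>
        (\<exists>l. \<forall>e>0. \<exists>N. \<forall>n\<ge>N. hnorm ip (s n - l) < e))"

definition dense_subspace :: "(complex \<Rightarrow> 'h::ab_group_add \<Rightarrow> 'h) \<Rightarrow> ('h \<Rightarrow> 'h \<Rightarrow> complex) \<Rightarrow> 'h set \<Rightarrow> bool"
  where "dense_subspace smH ip D \<longleftrightarrow>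
    module.subspace smH D \<and> (\<forall>u. \<forall>e>0. \<exists>\<xi>\<in>D. hnorm ip (u - \<xi>) < e)"

text \<open>Operators with domain D are represented by total functions; only their values on D matter.
  u \<in> D(A*) for an operator A with domain D, and A* u.\<close>
definition in_adj_dom :: "('h \<Rightarrow> 'h \<Rightarrow> complex) \<Rightarrow> 'h set \<Rightarrow> ('h \<Rightarrow> 'h) \<Rightarrow> 'h \<Rightarrow> bool"
  where "in_adj_dom ip D A u \<longleftrightarrow> (\<exists>\<zeta>. \<forall>\<eta>\<in>D. ip (A \<eta>) u = ip \<eta> \<zeta>)"

definition adj :: "('h \<Rightarrow> 'h \<Rightarrow> complex) \<Rightarrow> 'h set \<Rightarrow> ('h \<Rightarrow> 'h) \<Rightarrow> 'h \<Rightarrow> 'h"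
  where "adj ip D A u = (SOME \<zeta>. \<forall>\<eta>\<in>D. ip (A \<eta>) u = ip \<eta> \<zeta>)"

definition in_Ldagger :: "(complex \<Rightarrow> 'h::ab_group_add \<Rightarrow> 'h) \<Rightarrow> ('h \<Rightarrow> 'h \<Rightarrow> complex) \<Rightarrow> 'h set \<Rightarrow> ('h \<Rightarrow> 'h) \<Rightarrow> bool"
  where "in_Ldagger smH ip D X \<longleftrightarrow>
    (\<forall>\<xi>\<in>D. \<forall>\<eta>\<in>D. X (\<xi> + \<eta>) = X \<xi> + X \<eta>) \<and>
    (\<forall>\<xi>\<in>D. \<forall>c. X (smH c \<xi>) = smH c (X \<xi>)) \<and>
    (\<forall>\<eta>\<in>D. in_adj_dom ip D X \<eta>)"

definition dagger :: "('h \<Rightarrow> 'h \<Rightarrow> complex) \<Rightarrow> 'h set \<Rightarrow> ('h \<Rightarrow> 'h) \<Rightarrow> 'h \<Rightarrow> 'h"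
  where "dagger ip D X = adj ip D X"

definition weak_product_defined :: "('h \<Rightarrow> 'h \<Rightarrow> complex) \<Rightarrow> 'h set \<Rightarrow> ('h \<Rightarrow> 'h) \<Rightarrow> ('h \<Rightarrow> 'h) \<Rightarrow> bool"
  where "weak_product_defined ip D X1 X2 \<longleftrightarrow>
    (\<forall>\<xi>\<in>D. in_adj_dom ip D (dagger ip D X1) (X2 \<xi>)) \<and>
    (\<forall>\<xi>\<in>D. in_adj_dom ip D X2 (adj ip D X1 \<xi>))"

definition weak_product :: "('h \<Rightarrow> 'h \<Rightarrow> complex) \<Rightarrow> 'h set \<Rightarrow> ('h \<Rightarrow> 'h) \<Rightarrow> ('h \<Rightarrow> 'h) \<Rightarrow> 'h \<Rightarrow> 'h"
  where "weak_product ip D X1 X2 = (\<lambda>\<xi>. adj ip D (dagger ip D X1) (X2 \<xi>))"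

definition star_representation ::
  "(complex \<Rightarrow> 'a::ab_group_add \<Rightarrow> 'a) \<Rightarrow> ('a \<Rightarrow> 'a) \<Rightarrow> ('a \<times> 'a) set \<Rightarrow> ('a \<Rightarrow> 'a \<Rightarrow> 'a) \<Rightarrow>
   (complex \<Rightarrow> 'h::ab_group_add \<Rightarrow> 'h) \<Rightarrow> ('h \<Rightarrow> 'h \<Rightarrow> complex) \<Rightarrow> 'h set \<Rightarrow> ('a \<Rightarrow> 'h \<Rightarrow> 'h) \<Rightarrow> bool"
  where "star_representation sm invol Gam pmult smH ip D \<pi> \<longleftrightarrow>
    hilbert_space smH ip \<and> dense_subspace smH ip D \<and>
    (\<forall>x. in_Ldagger smH ip D (\<pi> x)) \<and>
    (\<forall>x y. \<forall>\<xi>\<in>D. \<pi> (x + y) \<xi> = \<pi> x \<xi> + \<pi> y \<xi>) \<and>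
    (\<forall>c x. \<forall>\<xi>\<in>D. \<pi> (sm c x) \<xi> = smH c (\<pi> x \<xi>)) \<and>
    (\<forall>x. \<forall>\<xi>\<in>D. \<pi> (invol x) \<xi> = dagger ip D (\<pi> x) \<xi>) \<and>
    (\<forall>x y. x \<in> L Gam y \<longrightarrow>
       weak_product_defined ip D (\<pi> x) (\<pi> y) \<and>
       (\<forall>\<xi>\<in>D. weak_product ip D (\<pi> x) (\<pi> y) \<xi> = \<pi> (pmult x y) \<xi>))"

definition strongly_continuous_rep ::
  "'a topology \<Rightarrow> ('h \<Rightarrow> 'h \<Rightarrow> complex) \<Rightarrow> 'h set \<Rightarrow> ('a \<Rightarrow> 'h::ab_group_add \<Rightarrow> 'h) \<Rightarrow> bool"
  where "strongly_continuous_rep tau ip D \<pi> \<longleftrightarrow>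
    (\<forall>\<xi>\<in>D. \<forall>x0. \<forall>e>0. \<exists>U. openin tau U \<and> x0 \<in> U \<and> (\<forall>y\<in>U. hnorm ip (\<pi> y \<xi> - \<pi> x0 \<xi>) < e))"

text \<open>The *-radical, relative to Hilbert spaces carried by the type 'h. Since the theorem below is
  stated for an arbitrary (universally quantified) type 'h, this ranges over all Hilbert spaces.\<close>
definition star_radical ::
  "'h::ab_group_add itself \<Rightarrow> (complex \<Rightarrow> 'a::ab_group_add \<Rightarrow> 'a) \<Rightarrow> ('a \<Rightarrow> 'a) \<Rightarrow> ('a \<times> 'a) set \<Rightarrow>
   ('a \<Rightarrow> 'a \<Rightarrow> 'a) \<Rightarrow> 'a topology \<Rightarrow> 'a set"
  where "star_radical (H :: 'h itself) sm invol Gam pmult tau =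
    {x. \<forall>(smH :: complex \<Rightarrow> 'h \<Rightarrow> 'h) ip D \<pi>.
          star_representation sm invol Gam pmult smH ip D \<pi> \<and> strongly_continuous_rep tau ip D \<pi>
          \<longrightarrow> (\<forall>\<xi>\<in>D. \<pi> x \<xi> = 0)}"

end

theory Submission
  imports Defs
begin

text \<open>For every *-representation \<pi> and \<xi> in its domain,
  \<open>\<parallel>\<pi>(x)\<xi>\<parallel>\<^sup>2 = \<langle>\<pi>(x\<^sup>*)\<^sup>\<dagger>\<xi>, \<pi>(x)\<xi>\<rangle> = \<langle>\<xi>, (\<pi>(x\<^sup>*) \<box> \<pi>(x))\<xi>\<rangle> = \<langle>\<xi>, \<pi>(x\<^sup>*x)\<xi>\<rangle>\<close>,
  which vanishes when \<open>x\<^sup>*x = 0\<close>.\<close>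

lemma hilbert_space_ip_zero_right:
  assumes "hilbert_space smH ip"
  shows "ip u 0 = 0"
proof -
  have "\<forall>u v w. ip u (v + w) = ip u v + ip u w"
    using assms unfolding hilbert_space_def by (elim conjE)
  then have "ip u (0 + 0) = ip u 0 + ip u 0" by blast
  then show ?thesis by simp
qed

lemma hilbert_space_ip_self_eq_zero:
  assumes "hilbert_space smH ip" and "ip u u = 0"
  shows "u = 0"
proof -
  have "\<forall>u. ip u u = 0 \<longrightarrow> u = 0"
    using assms(1) unfolding hilbert_space_def by (elim conjE)
  with assms(2) show ?thesis by blast
qed

lemma adj_inner:
  assumes "in_adj_dom ip D A u" and "\<eta> \<in> D"
  shows "ip (A \<eta>) u = ip \<eta> (adj ip D A u)"
proof -
  from assms(1) obtain \<zeta> where "\<forall>\<eta>\<in>D. ip (A \<eta>) u = ip \<eta> \<zeta>"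
    unfolding in_adj_dom_def by blast
  then have "\<forall>\<eta>\<in>D. ip (A \<eta>) u = ip \<eta> (adj ip D A u)"
    unfolding adj_def by (rule someI)
  with assms(2) show ?thesis by blast
qed

lemma partial_star_algebra_invol_invol:
  assumes "partial_star_algebra sm invol Gam pmult"
  shows "invol (invol x) = x"
  using assms unfolding partial_star_algebra_def by simp

lemma topological_partial_star_algebra_imp_partial_star_algebra:
  assumes "topological_partial_star_algebra sm invol Gam pmult tau"
  shows "partial_star_algebra sm invol Gam pmult"
  using assms unfolding topological_partial_star_algebra_def by simp

lemma star_representationD:
  assumes "star_representation sm invol Gam pmult smH ip D \<pi>"
  shows star_representation_hilbert_space: "hilbert_space smH ip"
    and star_representation_add: "\<xi> \<in> D \<Longrightarrow> \<pi> (x + y) \<xi> = \<pi> x \<xi> + \<pi> y \<xi>"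
    and star_representation_invol: "\<xi> \<in> D \<Longrightarrow> \<pi> (invol x) \<xi> = dagger ip D (\<pi> x) \<xi>"
    and star_representation_weak_product_defined:
      "x \<in> L Gam y \<Longrightarrow> weak_product_defined ip D (\<pi> x) (\<pi> y)"
    and star_representation_weak_product:
      "x \<in> L Gam y \<Longrightarrow> \<xi> \<in> D \<Longrightarrow> weak_product ip D (\<pi> x) (\<pi> y) \<xi> = \<pi> (pmult x y) \<xi>"
  using assms unfolding star_representation_def by simp_all

lemma star_representation_zero:
  assumes "star_representation sm invol Gam pmult smH ip D \<pi>" and "\<xi> \<in> D"
  shows "\<pi> 0 \<xi> = 0"
proof -
  have "\<pi> (0 + 0) \<xi> = \<pi> 0 \<xi> + \<pi> 0 \<xi>"
    using assms by (rule star_representation_add)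
  then show ?thesis by simp
qed

lemma star_representation_inner_mult:
  assumes rep: "star_representation sm invol Gam pmult smH ip D \<pi>"
    and "x \<in> L Gam y" and "\<xi> \<in> D" and "\<eta> \<in> D"
  shows "ip (\<pi> (invol x) \<eta>) (\<pi> y \<xi>) = ip \<eta> (\<pi> (pmult x y) \<xi>)"
proof -
  have "in_adj_dom ip D (dagger ip D (\<pi> x)) (\<pi> y \<xi>)"
    using star_representation_weak_product_defined[OF rep \<open>x \<in> L Gam y\<close>] \<open>\<xi> \<in> D\<close>
    unfolding weak_product_defined_def by simp
  then have "ip (dagger ip D (\<pi> x) \<eta>) (\<pi> y \<xi>) = ip \<eta> (weak_product ip D (\<pi> x) (\<pi> y) \<xi>)"
    unfolding weak_product_def using \<open>\<eta> \<in> D\<close> by (rule adj_inner)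
  then show ?thesis
    using star_representation_invol[OF rep \<open>\<eta> \<in> D\<close>]
      star_representation_weak_product[OF rep \<open>x \<in> L Gam y\<close> \<open>\<xi> \<in> D\<close>]
    by simp
qed

lemma star_representation_norm_square:
  assumes "partial_star_algebra sm invol Gam pmult"
    and "star_representation sm invol Gam pmult smH ip D \<pi>"
    and "invol x \<in> L Gam x" and "\<xi> \<in> D"
  shows "ip (\<pi> x \<xi>) (\<pi> x \<xi>) = ip \<xi> (\<pi> (pmult (invol x) x) \<xi>)"
  using star_representation_inner_mult[OF assms(2,3,4,4)]
  by (simp add: partial_star_algebra_invol_invol[OF assms(1)])

theorem proposition3p3:
  fixes sm :: "complex \<Rightarrow> 'a::ab_group_add \<Rightarrow> 'a"
    and invol :: "'a \<Rightarrow> 'a"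
    and Gam :: "('a \<times> 'a) set"
    and pmult :: "'a \<Rightarrow> 'a \<Rightarrow> 'a"
    and tau :: "'a topology"
    and x :: 'a
  assumes "topological_partial_star_algebra sm invol Gam pmult tau"
    and "invol x \<in> L Gam x"
    and "pmult (invol x) x = 0"
  shows "x \<in> star_radical TYPE('h::ab_group_add) sm invol Gam pmult tau"
  unfolding star_radical_def
proof clarsimp
  fix smH :: "complex \<Rightarrow> 'h \<Rightarrow> 'h" and ip D \<pi> \<xi>
  assume rep: "star_representation sm invol Gam pmult smH ip D \<pi>" and "\<xi> \<in> D"
  note algebra = topological_partial_star_algebra_imp_partial_star_algebra[OF assms(1)]
  note hilbert = star_representation_hilbert_space[OF rep]
  have "ip (\<pi> x \<xi>) (\<pi> x \<xi>) = ip \<xi> (\<pi> 0 \<xi>)"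
    using star_representation_norm_square[OF algebra rep assms(2) \<open>\<xi> \<in> D\<close>] assms(3) by simp
  also have "\<dots> = 0"
    by (simp add: star_representation_zero[OF rep \<open>\<xi> \<in> D\<close>] hilbert_space_ip_zero_right[OF hilbert])
  finally show "\<pi> x \<xi> = 0"
    by (rule hilbert_space_ip_self_eq_zero[OF hilbert])
qed

end
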